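(* Let $1<p<\infty$ and let $a=\{a_k\}_{k\in\mathbb Z}$ be any sequence of complex numbers. Then $$A_p(a):=\Big(\sum_{k=0}^\infty\Big(2^{k/p'}\sup_{r\in\mathbb N_0}\min(1,2^{r-k})\,\widehat a_{2^r}\Big)^p\Big)^{1/p}\lesssim\Big(\sum_{k\in\mathbb Z}(|k|+1)^{p-2}|a_k|^p\Big)^{1/p},$$ with a constant depending only on $p$.
   Context: $p'=p/(p-1)$. For $r\ge0$, $\widehat a_{2^r}=\sup_{2^r\le|m|<2^{r+1}}\frac1{|m|+1}\big|\sum_{j=0}^m a_j\big|$, where for $m<0$ the sum $\sum_{j=0}^ma_j$ means $\sum_{j=m}^0a_j$. *)

theory Defs
  imports "HOL-Analysis.Analysis"
begin

definition psum :: "(int \<Rightarrow> complex) \<Rightarrow> int \<Rightarrow> complex" where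
  "psum a m = (if m \<ge> 0 then (\<Sum>j\<in>{0..m}. a j) else (\<Sum>j\<in>{m..0}. a j))"

text \<open>ahat a r stands for the quantity hat-a indexed by 2^r.\<close>
definition ahat :: "(int \<Rightarrow> complex) \<Rightarrow> nat \<Rightarrow> real" where
  "ahat a r = (SUP m\<in>{m::int. 2 ^ r \<le> \<bar>m\<bar> \<and> \<bar>m\<bar> < 2 ^ (r + 1)}.
                  cmod (psum a m) / (real_of_int \<bar>m\<bar> + 1))"

definition inner_sup :: "(int \<Rightarrow> complex) \<Rightarrow> nat \<Rightarrow> real" where
  "inner_sup a k = (SUP r::nat. min 1 (2 powr (real r - real k)) * ahat a r)"

end

theory Submission
  imports Defs
begin

text \<open>Hoelder's inequality with the telescoping weights \<open>(\<bar>j\<bar> + 1) powr s - \<bar>j\<bar> powr s\<close>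
  bounds \<open>\<bar>psum a m\<bar> powr p\<close> by \<open>s powr (1 - p) * (\<bar>m\<bar> + 1) powr t\<close> times
  \<open>\<Sum>\<bar>j\<bar>\<le>\<bar>m\<bar>. w j * (\<bar>j\<bar> + 1) powr (1 - t)\<close>, where \<open>w j = (\<bar>j\<bar> + 1) powr (p - 2) * \<bar>a j\<bar> powr p\<close>
  and \<open>t = s * (p - 1) < 1\<close>. For \<open>m\<close> in the \<open>r\<close>-th dyadic block the extra factor
  \<open>min 1 (2 powr (r - k)) powr p * (\<bar>m\<bar> + 1) powr (- p)\<close> is at most \<open>max (2 ^ k) n powr (t - p)\<close>
  with \<open>n = \<bar>j\<bar> + 1\<close>, so the \<open>k\<close>-th term of the left-hand side is controlled by
  \<open>2 powr (k * (p - 1)) * \<Sum>j. w j * n powr (1 - t) * max (2 ^ k) n powr (t - p)\<close>.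
  Summing over \<open>k\<close> first, the two geometric series split at \<open>2 ^ k \<approx> n\<close> add up to a multiple
  of \<open>n powr (t - 1)\<close>, which cancels \<open>n powr (1 - t)\<close> and leaves a multiple of \<open>\<Sum>j. w j\<close>.\<close>

lemma sum_powr_le_weighted_pos:
  fixes x \<rho> :: "'a \<Rightarrow> real"
  assumes "finite J" "J \<noteq> {}" "1 \<le> p"
    and pos: "\<And>j. j \<in> J \<Longrightarrow> 0 < x j" "\<And>j. j \<in> J \<Longrightarrow> 0 < \<rho> j"
  shows "(\<Sum>j\<in>J. x j) powr p \<le> (\<Sum>j\<in>J. \<rho> j) powr (p - 1) * (\<Sum>j\<in>J. x j powr p * \<rho> j powr (1 - p))"
proof -
  define R where "R = (\<Sum>j\<in>J. \<rho> j)"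
  have R: "0 < R"
    unfolding R_def using assms by (simp add: sum_pos)
  have term_eq: "\<rho> j / R * (x j / \<rho> j) powr p = x j powr p * \<rho> j powr (1 - p) / R" if "j \<in> J" for j
    using pos[OF that] by (simp add: powr_divide powr_diff ac_simps)
  \<comment> \<open>Jensen for the convex map \<open>u \<mapsto> u powr p\<close>, with weights \<open>\<rho> j / R\<close> at the points \<open>x j / \<rho> j\<close>.\<close>
  have "(\<Sum>j\<in>J. (\<rho> j / R) *\<^sub>R (x j / \<rho> j)) powr p \<le> (\<Sum>j\<in>J. \<rho> j / R * (x j / \<rho> j) powr p)"
    using convex_on_sum[OF assms(1,2) powr_convex[OF assms(3)], of "\<lambda>j. \<rho> j / R" "\<lambda>j. x j / \<rho> j"]
      pos R by (auto simp: R_def sum_divide_distrib[symmetric] less_imp_le)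
  also have "(\<Sum>j\<in>J. (\<rho> j / R) *\<^sub>R (x j / \<rho> j)) = (\<Sum>j\<in>J. x j) / R"
    unfolding sum_divide_distrib by (intro sum.cong) (auto dest: pos(2))
  also have "(\<Sum>j\<in>J. \<rho> j / R * (x j / \<rho> j) powr p) = (\<Sum>j\<in>J. x j powr p * \<rho> j powr (1 - p)) / R"
    unfolding sum_divide_distrib by (intro sum.cong refl term_eq)
  finally have "(\<Sum>j\<in>J. x j) powr p / R powr p \<le> (\<Sum>j\<in>J. x j powr p * \<rho> j powr (1 - p)) / R"
    using R pos by (simp add: powr_divide sum_nonneg less_imp_le)
  then have "(\<Sum>j\<in>J. x j) powr p \<le> (\<Sum>j\<in>J. x j powr p * \<rho> j powr (1 - p)) / R * R powr p"
    using R by (simp add: divide_le_eq)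
  also have "\<dots> = R powr (p - 1) * (\<Sum>j\<in>J. x j powr p * \<rho> j powr (1 - p))"
    using R by (simp add: powr_diff)
  finally show ?thesis
    unfolding R_def .
qed

lemma sum_powr_le_weighted:
  fixes x \<rho> :: "'a \<Rightarrow> real"
  assumes "finite J" "1 \<le> p"
    and x: "\<And>j. j \<in> J \<Longrightarrow> 0 \<le> x j" and \<rho>: "\<And>j. j \<in> J \<Longrightarrow> 0 < \<rho> j"
  shows "(\<Sum>j\<in>J. x j) powr p \<le> (\<Sum>j\<in>J. \<rho> j) powr (p - 1) * (\<Sum>j\<in>J. x j powr p * \<rho> j powr (1 - p))"
proof -
  define J' where "J' = {j\<in>J. 0 < x j}"
  have J': "finite J'" "J' \<subseteq> J"
    using assms(1) unfolding J'_def by auto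
  have sum_J': "(\<Sum>j\<in>J. x j) = (\<Sum>j\<in>J'. x j)"
    using assms(1) x unfolding J'_def by (intro sum.mono_neutral_right) force+
  have rhs_mono: "(\<Sum>j\<in>J'. \<rho> j) powr (p - 1) * (\<Sum>j\<in>J'. x j powr p * \<rho> j powr (1 - p))
      \<le> (\<Sum>j\<in>J. \<rho> j) powr (p - 1) * (\<Sum>j\<in>J. x j powr p * \<rho> j powr (1 - p))"
  proof (rule mult_mono)
    show "(\<Sum>j\<in>J'. \<rho> j) powr (p - 1) \<le> (\<Sum>j\<in>J. \<rho> j) powr (p - 1)"
      using J' assms \<rho> by (intro powr_mono2 sum_nonneg sum_mono2) (auto intro: less_imp_le)
    show "(\<Sum>j\<in>J'. x j powr p * \<rho> j powr (1 - p)) \<le> (\<Sum>j\<in>J. x j powr p * \<rho> j powr (1 - p))"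
      using J' assms by (intro sum_mono2) auto
  qed (auto intro!: sum_nonneg)
  show ?thesis
  proof (cases "J' = {}")
    case True
    then show ?thesis
      using sum_J' rhs_mono by (simp add: J'(1))
  next
    case False
    have "(\<Sum>j\<in>J'. x j) powr p \<le> (\<Sum>j\<in>J'. \<rho> j) powr (p - 1) * (\<Sum>j\<in>J'. x j powr p * \<rho> j powr (1 - p))"
      using J' False assms by (intro sum_powr_le_weighted_pos) (auto simp: J'_def)
    then show ?thesis
      using sum_J' rhs_mono by simp
  qed
qed

lemma powr_succ_diff_ge:
  fixes n s :: real
  assumes "0 \<le> n" "0 < s" "s \<le> 1"
  shows "s * (n + 1) powr (s - 1) \<le> (n + 1) powr s - n powr s"
proof (cases "n = 0")
  case False
  with assms have n: "0 < n" by simp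
  have "((\<lambda>z. z powr s) has_real_derivative s * z powr (s - 1)) (at z)" if "n \<le> z" for z
    using n that by (intro has_real_derivative_powr) auto
  then obtain z where z: "n < z" "z < n + 1" "(n + 1) powr s - n powr s = s * z powr (s - 1)"
    using MVT2[of n "n + 1" "\<lambda>z. z powr s" "\<lambda>z. s * z powr (s - 1)"] by auto
  have "(n + 1) powr (s - 1) \<le> z powr (s - 1)"
    using z n assms by (intro powr_mono2') auto
  then show ?thesis
    using z assms by (simp add: mult_left_mono)
qed (use assms in simp)

lemma sum_power_lessThan_le:
  fixes x :: real
  assumes "1 < x"
  shows "(\<Sum>k<n. x ^ k) \<le> x ^ n / (x - 1)"
proof -
  have "(\<Sum>k<n. x ^ k) = (x ^ n - 1) / (x - 1)"
    using assms by (simp add: sum_gp_strict field_simps)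
  then show ?thesis
    using assms by (simp add: divide_right_mono)
qed

lemma sum_power_atLeastLessThan_le:
  fixes y :: real
  assumes "0 \<le> y" "y < 1"
  shows "(\<Sum>k\<in>{m..<n}. y ^ k) \<le> y ^ m / (1 - y)"
proof (cases "m < n")
  case True
  then have "(1 - y) * (\<Sum>k\<in>{m..<n}. y ^ k) = y ^ m - y ^ n"
    using sum_gp_multiplied[of m "n - 1" y] by (simp add: atLeastLessThanSuc_atLeastAtMost[symmetric])
  then have "(1 - y) * (\<Sum>k\<in>{m..<n}. y ^ k) \<le> y ^ m"
    using assms by simp
  then show ?thesis
    using assms by (simp add: pos_le_divide_eq mult.commute)
qed (use assms in auto)

lemma exists_power_of_two_between:
  fixes n :: real
  assumes "1 \<le> n"
  obtains K where "n < 2 ^ K" "2 ^ K \<le> 2 * n"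
proof -
  obtain K0 where "\<not> n < 2 ^ K0" "n < 2 ^ Suc K0"
    using exists_least_lemma[of "\<lambda>k. n < 2 ^ k"] real_arch_pow[of 2 n] assms by auto
  then show ?thesis
    using that[of "Suc K0"] by simp
qed

lemma has_sum_sum:
  fixes f :: "'i \<Rightarrow> 'a \<Rightarrow> 'b::topological_comm_monoid_add"
  assumes "finite I" "\<And>i. i \<in> I \<Longrightarrow> (f i has_sum s i) A"
  shows "((\<lambda>x. \<Sum>i\<in>I. f i x) has_sum (\<Sum>i\<in>I. s i)) A"
  using assms by (induction I rule: finite_induct) (auto intro: has_sum_add)

abbreviation bracket :: "int \<Rightarrow> real" where
  "bracket j \<equiv> real_of_int \<bar>j\<bar> + 1"

definition weighted_power :: "real \<Rightarrow> (int \<Rightarrow> complex) \<Rightarrow> int \<Rightarrow> real" where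
  "weighted_power p a j = bracket j powr (p - 2) * cmod (a j) powr p"

definition psum_range :: "int \<Rightarrow> int set" where
  "psum_range m = (if 0 \<le> m then {0..m} else {m..0})"

lemma psum_eq_sum_psum_range: "psum a m = (\<Sum>j\<in>psum_range m. a j)"
  unfolding psum_def psum_range_def by simp

lemma finite_psum_range [simp]: "finite (psum_range m)"
  unfolding psum_range_def by simp

lemma abs_le_of_mem_psum_range: "j \<in> psum_range m \<Longrightarrow> \<bar>j\<bar> \<le> \<bar>m\<bar>"
  unfolding psum_range_def by (auto split: if_splits)

lemma sum_psum_range_abs: "(\<Sum>j\<in>psum_range m. f (nat \<bar>j\<bar>)) = (\<Sum>i\<le>nat \<bar>m\<bar>. f i)"
  by (rule sum.reindex_bij_witness[where i="\<lambda>i. sgn m * int i" and j="\<lambda>j. nat \<bar>j\<bar>"])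
     (auto simp: psum_range_def abs_if sgn_if split: if_splits)

lemma sum_psum_range_increments:
  fixes g :: "real \<Rightarrow> real"
  shows "(\<Sum>j\<in>psum_range m. g (bracket j) - g (real_of_int \<bar>j\<bar>)) = g (bracket m) - g 0"
proof -
  have "(\<Sum>j\<in>psum_range m. g (bracket j) - g (real_of_int \<bar>j\<bar>))
      = (\<Sum>i\<le>nat \<bar>m\<bar>. g (real (Suc i)) - g (real i))"
    using sum_psum_range_abs[of "\<lambda>i. g (real (Suc i)) - g (real i)" m] by (simp add: add.commute)
  also have "\<dots> = g (real (Suc (nat \<bar>m\<bar>))) - g (real 0)"
    using sum_Suc_diff[of 0 "nat \<bar>m\<bar>" "\<lambda>i. g (real i)"] by (simp add: atMost_atLeast0)
  finally show ?thesis
    by (simp add: add.commute)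
qed

lemma norm_psum_powr_le:
  fixes a :: "int \<Rightarrow> complex"
  assumes "1 < p" "0 < s" "s \<le> 1"
  shows "cmod (psum a m) powr p \<le> s powr (1 - p) * bracket m powr (s * (p - 1)) *
           (\<Sum>j\<in>psum_range m. weighted_power p a j * bracket j powr (1 - s * (p - 1)))"
proof -
  define \<rho> where "\<rho> j = bracket j powr s - real_of_int \<bar>j\<bar> powr s" for j
  have \<rho>_ge: "s * bracket j powr (s - 1) \<le> \<rho> j" for j
    unfolding \<rho>_def using powr_succ_diff_ge[of "real_of_int \<bar>j\<bar>" s] assms by simp
  have \<rho>_pos: "0 < \<rho> j" for j
    using assms by (intro less_le_trans[OF _ \<rho>_ge]) simp
  have \<rho>_sum: "(\<Sum>j\<in>psum_range m. \<rho> j) = bracket m powr s"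
    using sum_psum_range_increments[of "\<lambda>x. x powr s" m] by (simp add: \<rho>_def)
  have term_le: "cmod (a j) powr p * \<rho> j powr (1 - p)
      \<le> s powr (1 - p) * (weighted_power p a j * bracket j powr (1 - s * (p - 1)))" for j
  proof -
    have "\<rho> j powr (1 - p) \<le> (s * bracket j powr (s - 1)) powr (1 - p)"
      using \<rho>_ge assms by (intro powr_mono2') auto
    also have "\<dots> = s powr (1 - p) * bracket j powr ((s - 1) * (1 - p))"
      using assms by (simp add: powr_mult powr_powr)
    also have "(s - 1) * (1 - p) = (p - 2) + (1 - s * (p - 1))"
      by (simp add: algebra_simps)
    finally have "\<rho> j powr (1 - p) \<le> s powr (1 - p) * (bracket j powr (p - 2) * bracket j powr (1 - s * (p - 1)))"
      by (simp only: powr_add)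
    then have "cmod (a j) powr p * \<rho> j powr (1 - p) \<le> cmod (a j) powr p *
        (s powr (1 - p) * (bracket j powr (p - 2) * bracket j powr (1 - s * (p - 1))))"
      by (rule mult_left_mono) simp
    then show ?thesis
      by (simp add: weighted_power_def ac_simps)
  qed
  have "cmod (psum a m) powr p \<le> (\<Sum>j\<in>psum_range m. cmod (a j)) powr p"
    unfolding psum_eq_sum_psum_range using assms by (intro powr_mono2 norm_sum) auto
  also have "\<dots> \<le> (\<Sum>j\<in>psum_range m. \<rho> j) powr (p - 1) *
      (\<Sum>j\<in>psum_range m. cmod (a j) powr p * \<rho> j powr (1 - p))"
    using assms \<rho>_pos by (intro sum_powr_le_weighted) auto
  also have "(\<Sum>j\<in>psum_range m. \<rho> j) powr (p - 1) = bracket m powr (s * (p - 1))"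
    unfolding \<rho>_sum by (simp add: powr_powr)
  also have "bracket m powr (s * (p - 1)) * (\<Sum>j\<in>psum_range m. cmod (a j) powr p * \<rho> j powr (1 - p))
      \<le> bracket m powr (s * (p - 1)) * (s powr (1 - p) *
          (\<Sum>j\<in>psum_range m. weighted_power p a j * bracket j powr (1 - s * (p - 1))))"
    unfolding sum_distrib_left by (intro mult_left_mono sum_mono term_le) simp
  finally show ?thesis
    by (simp only: ac_simps)
qed

text \<open>For \<open>t \<le> p\<close> this is \<open>max (2 ^ k) n powr (t - p)\<close>.\<close>
definition dyadic_cutoff :: "real \<Rightarrow> real \<Rightarrow> nat \<Rightarrow> real \<Rightarrow> real" where
  "dyadic_cutoff p t k n = min (2 powr (real k * (t - p))) (n powr (t - p))"

lemma dyadic_cutoff_nonneg: "0 \<le> dyadic_cutoff p t k n"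
  unfolding dyadic_cutoff_def by simp

lemma dyadic_cutoff_ge:
  fixes M n :: real
  assumes "0 \<le> t" "t \<le> p" "1 \<le> n" "n \<le> M" "2 powr real r < M"
  shows "min 1 (2 powr (real r - real k)) powr p * M powr (t - p) \<le> dyadic_cutoff p t k n"
proof -
  define \<mu> where "\<mu> = min 1 (2 powr (real r - real k))"
  define K where "K = (2::real) powr real k"
  have K: "0 < K" and M: "0 < M"
    using assms by (auto simp: K_def)
  have "2 powr (real r - real k) \<le> M / K"
    using assms K by (simp add: K_def powr_diff divide_right_mono)
  then have \<mu>: "0 < \<mu>" "\<mu> \<le> 1" "\<mu> \<le> M / K"
    by (auto simp: \<mu>_def)
  have \<mu>_powr: "\<mu> powr p * M powr (t - p) \<le> M powr (t - p)"
    using \<mu> assms by (simp add: mult_left_le_one_le powr_le1)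
  have "M powr (t - p) \<le> n powr (t - p)"
    using assms by (intro powr_mono2') auto
  then have "\<mu> powr p * M powr (t - p) \<le> n powr (t - p)"
    using \<mu>_powr by linarith
  moreover have "\<mu> powr p * M powr (t - p) \<le> K powr (t - p)"
  proof (cases "K \<le> M")
    case True
    then have "M powr (t - p) \<le> K powr (t - p)"
      using assms K by (intro powr_mono2') auto
    then show ?thesis
      using \<mu>_powr by linarith
  next
    case False
    have "\<mu> powr p * M powr (t - p) \<le> (M / K) powr p * M powr (t - p)"
      using \<mu> assms by (intro mult_right_mono powr_mono2) auto
    also have "\<dots> = M powr t / K powr p"
      using M K by (simp add: powr_divide powr_add[symmetric])
    also have "\<dots> \<le> K powr t / K powr p"
      using False M K assms by (intro divide_right_mono powr_mono2) auto
    finally show ?thesis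
      using K by (simp add: powr_diff)
  qed
  ultimately show ?thesis
    unfolding dyadic_cutoff_def \<mu>_def K_def by (simp add: powr_powr)
qed

lemma powr_mult_dyadic_cutoff_le_1:
  assumes "1 \<le> p" "1 \<le> n"
  shows "n powr (1 - t) * dyadic_cutoff p t k n \<le> 1"
proof -
  have "n powr (1 - t) * dyadic_cutoff p t k n \<le> n powr (1 - t) * n powr (t - p)"
    unfolding dyadic_cutoff_def by (intro mult_left_mono) auto
  also have "\<dots> = n powr (1 - p)"
    using assms by (simp add: powr_add[symmetric])
  also have "\<dots> \<le> 1"
    using powr_mono[of "1 - p" 0 n] assms by simp
  finally show ?thesis .
qed

lemma sum_dyadic_cutoff_le:
  fixes n :: real
  assumes "1 < p" "0 \<le> t" "t < 1" "1 \<le> n"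
  shows "n powr (1 - t) * (\<Sum>k<K. 2 powr (real k * (p - 1)) * dyadic_cutoff p t k n)
           \<le> 2 powr (p - 1) / (2 powr (p - 1) - 1) + 1 / (1 - 2 powr (t - 1))"
proof -
  define x where "x = (2::real) powr (p - 1)"
  define y where "y = (2::real) powr (t - 1)"
  have x: "1 < x"
    using assms by (simp add: x_def)
  have y: "0 < y" "y < 1"
    using assms powr_less_cancel_iff[of "2::real" "t - 1" 0] by (auto simp: y_def)
  obtain K1 where K1: "n < 2 ^ K1" "2 ^ K1 \<le> 2 * n"
    using exists_power_of_two_between assms(4) by blast
  define f where "f k = 2 powr (real k * (p - 1)) * dyadic_cutoff p t k n" for k
  have f_nonneg: "0 \<le> f k" for k
    unfolding f_def by (simp add: dyadic_cutoff_nonneg)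
  have f_le_x: "f k \<le> x ^ k * n powr (t - p)" for k
  proof -
    have "f k \<le> 2 powr (real k * (p - 1)) * n powr (t - p)"
      unfolding f_def dyadic_cutoff_def by (intro mult_left_mono) auto
    then show ?thesis
      by (simp add: x_def powr_power)
  qed
  have f_le_y: "f k \<le> y ^ k" for k
  proof -
    have "f k \<le> 2 powr (real k * (p - 1)) * 2 powr (real k * (t - p))"
      unfolding f_def dyadic_cutoff_def by (intro mult_left_mono) auto
    also have "\<dots> = y ^ k"
      by (simp add: y_def powr_power powr_add[symmetric] algebra_simps)
    finally show ?thesis .
  qed
  have "x ^ K1 = (2 ^ K1) powr (p - 1)"
    by (simp add: x_def powr_power powr_realpow[symmetric] powr_powr mult.commute)
  also have "\<dots> \<le> (2 * n) powr (p - 1)"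
    using K1 assms by (intro powr_mono2) auto
  finally have x_K1: "x ^ K1 \<le> x * n powr (p - 1)"
    using assms by (simp add: x_def powr_mult)
  have "y ^ K1 = (2 ^ K1) powr (t - 1)"
    by (simp add: y_def powr_power powr_realpow[symmetric] powr_powr mult.commute)
  also have "\<dots> \<le> n powr (t - 1)"
    using K1 assms by (intro powr_mono2') auto
  finally have y_K1: "y ^ K1 \<le> n powr (t - 1)" .
  \<comment> \<open>Below \<open>K1\<close> the cutoff is \<open>n powr (t - p)\<close>, from \<open>K1\<close> on it is \<open>2 powr (k * (t - p))\<close>.\<close>
  have "(\<Sum>k<K1. f k) \<le> (\<Sum>k<K1. x ^ k) * n powr (t - p)"
    unfolding sum_distrib_right by (intro sum_mono f_le_x)
  also have "\<dots> \<le> x ^ K1 / (x - 1) * n powr (t - p)"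
    using x by (intro mult_right_mono sum_power_lessThan_le) auto
  also have "\<dots> \<le> x * n powr (p - 1) / (x - 1) * n powr (t - p)"
    using x x_K1 by (intro mult_right_mono divide_right_mono) auto
  also have "\<dots> = x / (x - 1) * n powr (t - 1)"
    by (simp add: powr_add[symmetric])
  finally have low: "(\<Sum>k<K1. f k) \<le> x / (x - 1) * n powr (t - 1)" .
  have "(\<Sum>k\<in>{K1..<max K K1}. f k) \<le> (\<Sum>k\<in>{K1..<max K K1}. y ^ k)"
    by (intro sum_mono f_le_y)
  also have "\<dots> \<le> y ^ K1 / (1 - y)"
    using y by (intro sum_power_atLeastLessThan_le) auto
  also have "\<dots> \<le> n powr (t - 1) / (1 - y)"
    using y y_K1 by (intro divide_right_mono) auto
  finally have high: "(\<Sum>k\<in>{K1..<max K K1}. f k) \<le> n powr (t - 1) / (1 - y)" .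
  have "(\<Sum>k<K. f k) \<le> (\<Sum>k<max K K1. f k)"
    using f_nonneg by (intro sum_mono2) auto
  also have "\<dots> = (\<Sum>k<K1. f k) + (\<Sum>k\<in>{K1..<max K K1}. f k)"
    by (simp add: lessThan_atLeast0 sum.atLeastLessThan_concat)
  finally have "(\<Sum>k<K. f k) \<le> (x / (x - 1) + 1 / (1 - y)) * n powr (t - 1)"
    using low high by (simp add: algebra_simps)
  then have "n powr (1 - t) * (\<Sum>k<K. f k) \<le> n powr (1 - t) * ((x / (x - 1) + 1 / (1 - y)) * n powr (t - 1))"
    by (rule mult_left_mono) simp
  also have "\<dots> = n powr (1 - t) * n powr (t - 1) * (x / (x - 1) + 1 / (1 - y))"
    by (simp only: ac_simps)
  also have "n powr (1 - t) * n powr (t - 1) = 1"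
    using assms by (simp add: powr_add[symmetric])
  finally show ?thesis
    by (simp add: f_def x_def y_def)
qed

definition dyadic_block :: "nat \<Rightarrow> int set" where
  "dyadic_block r = {m. 2 ^ r \<le> \<bar>m\<bar> \<and> \<bar>m\<bar> < 2 ^ (r + 1)}"

lemma ahat_eq_SUP_dyadic_block: "ahat a r = (SUP m\<in>dyadic_block r. cmod (psum a m) / bracket m)"
  unfolding ahat_def dyadic_block_def ..

lemma finite_dyadic_block: "finite (dyadic_block r)"
  by (rule finite_subset[of _ "{- (2 ^ (r + 1))..2 ^ (r + 1)}"]) (auto simp: dyadic_block_def)

lemma power_in_dyadic_block: "2 ^ r \<in> dyadic_block r"
  by (simp add: dyadic_block_def)

lemma bracket_gt_of_mem_dyadic_block:
  assumes "m \<in> dyadic_block r"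
  shows "2 powr real r < bracket m"
proof -
  have "(2::int) ^ r \<le> \<bar>m\<bar>"
    using assms by (simp add: dyadic_block_def)
  then have "(2::real) ^ r \<le> real_of_int \<bar>m\<bar>"
    by (metis of_int_le_iff of_int_numeral of_int_power)
  then show ?thesis
    by (simp add: powr_realpow)
qed

lemma ahat_nonneg: "0 \<le> ahat a r"
proof -
  have "0 \<le> cmod (psum a (2 ^ r)) / bracket (2 ^ r)"
    by simp
  also have "\<dots> \<le> ahat a r"
    unfolding ahat_eq_SUP_dyadic_block
    by (rule cSUP_upper[OF power_in_dyadic_block]) (simp add: finite_dyadic_block)
  finally show ?thesis .
qed

lemma ahat_le:
  assumes "\<And>m. m \<in> dyadic_block r \<Longrightarrow> cmod (psum a m) / bracket m \<le> X"
  shows "ahat a r \<le> X"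
  unfolding ahat_eq_SUP_dyadic_block using power_in_dyadic_block by (intro cSUP_least assms) auto

definition cutoff_weight :: "real \<Rightarrow> real \<Rightarrow> (int \<Rightarrow> complex) \<Rightarrow> nat \<Rightarrow> int \<Rightarrow> real" where
  "cutoff_weight p t a k j = weighted_power p a j * bracket j powr (1 - t) * dyadic_cutoff p t k (bracket j)"

lemma cutoff_weight_nonneg: "0 \<le> cutoff_weight p t a k j"
  by (simp add: cutoff_weight_def weighted_power_def dyadic_cutoff_nonneg)

lemma cutoff_weight_le:
  assumes "1 \<le> p"
  shows "cutoff_weight p t a k j \<le> weighted_power p a j"
proof -
  have "weighted_power p a j * (bracket j powr (1 - t) * dyadic_cutoff p t k (bracket j)) \<le> weighted_power p a j * 1"
    using assms by (intro mult_left_mono powr_mult_dyadic_cutoff_le_1) (auto simp: weighted_power_def)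
  then show ?thesis
    by (simp add: cutoff_weight_def mult.assoc)
qed

lemma summable_cutoff_weight:
  assumes "1 \<le> p" "weighted_power p a summable_on UNIV"
  shows "cutoff_weight p t a k summable_on UNIV"
  using assms cutoff_weight_nonneg cutoff_weight_le by (intro summable_on_comparison_test[OF assms(2)]) auto

lemma scaled_block_average_powr_le:
  fixes a :: "int \<Rightarrow> complex"
  assumes "1 < p" "0 < s" "s \<le> 1" "t = s * (p - 1)" "m \<in> dyadic_block r"
  shows "(min 1 (2 powr (real r - real k)) * (cmod (psum a m) / bracket m)) powr p
           \<le> s powr (1 - p) * (\<Sum>j\<in>psum_range m. cutoff_weight p t a k j)"
proof -
  define \<mu> where "\<mu> = min 1 (2 powr (real r - real k))"
  define M where "M = bracket m"
  define S where "S = (\<Sum>j\<in>psum_range m. weighted_power p a j * bracket j powr (1 - t) * (\<mu> powr p * M powr (t - p)))"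
  have M: "1 \<le> M" and \<mu>: "0 < \<mu>"
    by (simp_all add: M_def \<mu>_def)
  have t: "0 \<le> t" "t \<le> p - 1"
    using assms by (auto intro: mult_left_le_one_le)
  have "(\<mu> * (cmod (psum a m) / M)) powr p = \<mu> powr p * M powr (- p) * cmod (psum a m) powr p"
    using M \<mu> by (simp add: powr_mult powr_divide powr_minus_divide)
  also have "\<dots> \<le> \<mu> powr p * M powr (- p) * (s powr (1 - p) * M powr t *
      (\<Sum>j\<in>psum_range m. weighted_power p a j * bracket j powr (1 - t)))"
    using norm_psum_powr_le[of p s a m] assms by (intro mult_left_mono) (auto simp: M_def)
  also have "\<dots> = s powr (1 - p) * S"
  proof -
    have "M powr (t - p) = M powr t * M powr (- p)"
      by (simp add: powr_add[symmetric])
    then show ?thesis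
      by (simp add: S_def sum_distrib_left sum_distrib_right ac_simps)
  qed
  also have "S \<le> (\<Sum>j\<in>psum_range m. cutoff_weight p t a k j)"
    unfolding S_def cutoff_weight_def
  proof (intro sum_mono mult_left_mono)
    fix j
    assume "j \<in> psum_range m"
    then have "bracket j \<le> M"
      unfolding M_def using abs_le_of_mem_psum_range by (simp add: of_int_abs[symmetric] del: of_int_abs)
    then show "\<mu> powr p * M powr (t - p) \<le> dyadic_cutoff p t k (bracket j)"
      using bracket_gt_of_mem_dyadic_block[OF assms(5)] t
      unfolding \<mu>_def M_def by (intro dyadic_cutoff_ge) simp_all
  qed (simp add: weighted_power_def)
  finally show ?thesis
    using assms(2) by (simp add: \<mu>_def M_def mult_left_mono)
qed

lemma scaled_ahat_le:
  fixes a :: "int \<Rightarrow> complex"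
  assumes "1 < p" "0 < s" "s \<le> 1" "t = s * (p - 1)" "weighted_power p a summable_on UNIV"
  shows "min 1 (2 powr (real r - real k)) * ahat a r
           \<le> (s powr (1 - p) * (\<Sum>\<^sub>\<infinity>j. cutoff_weight p t a k j)) powr (1 / p)"
proof -
  define \<mu> where "\<mu> = min 1 (2 powr (real r - real k))"
  define B where "B = (s powr (1 - p) * (\<Sum>\<^sub>\<infinity>j. cutoff_weight p t a k j)) powr (1 / p)"
  have \<mu>: "0 < \<mu>"
    by (simp add: \<mu>_def)
  have "\<mu> * (cmod (psum a m) / bracket m) \<le> B" if "m \<in> dyadic_block r" for m
  proof -
    have "(\<Sum>j\<in>psum_range m. cutoff_weight p t a k j) \<le> (\<Sum>\<^sub>\<infinity>j. cutoff_weight p t a k j)"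
      using assms by (intro finite_sum_le_infsum summable_cutoff_weight cutoff_weight_nonneg) auto
    then have "s powr (1 - p) * (\<Sum>j\<in>psum_range m. cutoff_weight p t a k j)
        \<le> s powr (1 - p) * (\<Sum>\<^sub>\<infinity>j. cutoff_weight p t a k j)"
      by (rule mult_left_mono) simp
    with scaled_block_average_powr_le[OF assms(1-4) that, of k a]
    have "(\<mu> * (cmod (psum a m) / bracket m)) powr p \<le> s powr (1 - p) * (\<Sum>\<^sub>\<infinity>j. cutoff_weight p t a k j)"
      unfolding \<mu>_def by (rule order_trans)
    then have "((\<mu> * (cmod (psum a m) / bracket m)) powr p) powr (1 / p) \<le> B"
      unfolding B_def using assms by (intro powr_mono2) auto
    then show ?thesis
      using assms \<mu> by (simp add: powr_powr)
  qed
  then have "ahat a r \<le> B / \<mu>"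
    using \<mu> by (intro ahat_le) (simp add: pos_le_divide_eq mult.commute)
  then show ?thesis
    using \<mu> by (simp add: \<mu>_def B_def pos_le_divide_eq mult.commute)
qed

lemma inner_sup_nonneg:
  assumes "bdd_above (range (\<lambda>r. min 1 (2 powr (real r - real k)) * ahat a r))"
  shows "0 \<le> inner_sup a k"
proof -
  have "0 \<le> min 1 (2 powr (real 0 - real k)) * ahat a 0"
    using ahat_nonneg[of a 0] by simp
  also have "\<dots> \<le> inner_sup a k"
    unfolding inner_sup_def using assms by (rule cSUP_upper[OF UNIV_I])
  finally show ?thesis .
qed

lemma inner_sup_powr_le:
  fixes a :: "int \<Rightarrow> complex"
  assumes "1 < p" "0 < s" "s \<le> 1" "t = s * (p - 1)" "weighted_power p a summable_on UNIV"
  shows "bdd_above (range (\<lambda>r. min 1 (2 powr (real r - real k)) * ahat a r))"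
    and "inner_sup a k powr p \<le> s powr (1 - p) * (\<Sum>\<^sub>\<infinity>j. cutoff_weight p t a k j)"
proof -
  note bound = scaled_ahat_le[OF assms]
  show bdd: "bdd_above (range (\<lambda>r. min 1 (2 powr (real r - real k)) * ahat a r))"
    using bound by (intro bdd_aboveI2)
  have "inner_sup a k \<le> (s powr (1 - p) * (\<Sum>\<^sub>\<infinity>j. cutoff_weight p t a k j)) powr (1 / p)"
    unfolding inner_sup_def using bound by (intro cSUP_least) auto
  then have "inner_sup a k powr p \<le> ((s powr (1 - p) * (\<Sum>\<^sub>\<infinity>j. cutoff_weight p t a k j)) powr (1 / p)) powr p"
    using assms inner_sup_nonneg[OF bdd] by (intro powr_mono2) auto
  also have "\<dots> = s powr (1 - p) * (\<Sum>\<^sub>\<infinity>j. cutoff_weight p t a k j)"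
    using assms by (simp add: powr_powr infsum_nonneg cutoff_weight_nonneg)
  finally show "inner_sup a k powr p \<le> s powr (1 - p) * (\<Sum>\<^sub>\<infinity>j. cutoff_weight p t a k j)" .
qed

lemma weighted_inner_sup_sum_le:
  fixes a :: "int \<Rightarrow> complex"
  assumes "1 < p" "0 < s" "s \<le> 1" "t = s * (p - 1)" and w: "weighted_power p a summable_on UNIV"
    and C: "\<And>n K. 1 \<le> n \<Longrightarrow>
      n powr (1 - t) * (\<Sum>k<K. 2 powr (real k * (p - 1)) * dyadic_cutoff p t k n) \<le> C"
  shows "summable (\<lambda>k. 2 powr (real k * (p - 1)) * inner_sup a k powr p)"
    and "(\<Sum>k. 2 powr (real k * (p - 1)) * inner_sup a k powr p)
           \<le> s powr (1 - p) * C * (\<Sum>\<^sub>\<infinity>j. weighted_power p a j)"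
proof -
  define c where "c k = 2 powr (real k * (p - 1))" for k :: nat
  define \<Phi> where "\<Phi> k = (\<Sum>\<^sub>\<infinity>j. cutoff_weight p t a k j)" for k
  define S where "S = (\<Sum>\<^sub>\<infinity>j. weighted_power p a j)"
  have partial: "(\<Sum>k<K. c k * inner_sup a k powr p) \<le> s powr (1 - p) * C * S" for K
  proof -
    \<comment> \<open>Interchange the finite \<open>k\<close>-sum with the \<open>j\<close>-sum and apply \<open>C\<close> pointwise in \<open>j\<close>.\<close>
    have "((\<lambda>j. \<Sum>k<K. c k * cutoff_weight p t a k j) has_sum (\<Sum>k<K. c k * \<Phi> k)) UNIV"
      using assms unfolding \<Phi>_def
      by (intro has_sum_sum has_sum_cmult_right has_sum_infsum summable_cutoff_weight) auto
    moreover have "((\<lambda>j. C * weighted_power p a j) has_sum (C * S)) UNIV"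
      unfolding S_def using w by (intro has_sum_cmult_right has_sum_infsum)
    moreover have "(\<Sum>k<K. c k * cutoff_weight p t a k j) \<le> C * weighted_power p a j" for j
    proof -
      have "(\<Sum>k<K. c k * cutoff_weight p t a k j) = weighted_power p a j *
          (bracket j powr (1 - t) * (\<Sum>k<K. c k * dyadic_cutoff p t k (bracket j)))"
        by (simp add: cutoff_weight_def sum_distrib_left ac_simps)
      also have "\<dots> \<le> weighted_power p a j * C"
        unfolding c_def using C by (intro mult_left_mono) (auto simp: weighted_power_def)
      finally show ?thesis
        by (simp add: mult.commute)
    qed
    ultimately have "(\<Sum>k<K. c k * \<Phi> k) \<le> C * S"
      by (rule has_sum_mono)
    then have "s powr (1 - p) * (\<Sum>k<K. c k * \<Phi> k) \<le> s powr (1 - p) * C * S"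
      unfolding mult.assoc by (rule mult_left_mono) simp
    moreover have "(\<Sum>k<K. c k * inner_sup a k powr p) \<le> s powr (1 - p) * (\<Sum>k<K. c k * \<Phi> k)"
      unfolding sum_distrib_left \<Phi>_def c_def
      using inner_sup_powr_le(2)[OF assms(1-5)] by (intro sum_mono) (simp add: mult.left_commute mult_left_mono)
    ultimately show ?thesis
      by linarith
  qed
  show summable: "summable (\<lambda>k. 2 powr (real k * (p - 1)) * inner_sup a k powr p)"
    using partial unfolding c_def by (intro summableI_nonneg_bounded) auto
  show "(\<Sum>k. 2 powr (real k * (p - 1)) * inner_sup a k powr p) \<le> s powr (1 - p) * C * S"
    using partial unfolding c_def by (intro suminf_le_const summable) auto
qed

lemma powr_conjugate_exponent_mult:
  fixes x :: real
  assumes "1 < p" "0 \<le> x"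
  shows "(2 powr (real k / (p / (p - 1))) * x) powr p = 2 powr (real k * (p - 1)) * x powr p"
proof -
  have "real k / (p / (p - 1)) * p = real k * (p - 1)"
    using assms by (simp add: field_simps)
  then show ?thesis
    using assms by (simp add: powr_mult powr_powr)
qed

lemma weighted_inner_sup_sum_bounded:
  assumes "1 < p"
  shows "\<exists>C>0. \<forall>a. weighted_power p a summable_on UNIV \<longrightarrow>
      (\<forall>k. bdd_above (range (\<lambda>r. min 1 (2 powr (real r - real k)) * ahat a r))) \<and>
      summable (\<lambda>k. 2 powr (real k * (p - 1)) * inner_sup a k powr p) \<and>
      (\<Sum>k. 2 powr (real k * (p - 1)) * inner_sup a k powr p) \<le> C * (\<Sum>\<^sub>\<infinity>j. weighted_power p a j)"
proof -
  define s where "s = min 1 (1 / (2 * (p - 1)))"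
  define t where "t = s * (p - 1)"
  have s: "0 < s" "s \<le> 1"
    using assms by (auto simp: s_def)
  have "t \<le> 1 / (2 * (p - 1)) * (p - 1)"
    unfolding t_def s_def using assms by (intro mult_right_mono) auto
  also have "\<dots> = 1 / 2"
    using assms by simp
  finally have t: "0 \<le> t" "t < 1"
    using assms s by (auto simp: t_def)
  define C where "C = 2 powr (p - 1) / (2 powr (p - 1) - 1) + 1 / (1 - 2 powr (t - 1))"
  have "0 < C"
    using assms t powr_less_cancel_iff[of "2::real" "t - 1" 0] by (simp add: C_def add_pos_pos)
  show ?thesis
  proof (intro exI[of _ "s powr (1 - p) * C"] conjI allI impI)
    show "0 < s powr (1 - p) * C"
      using \<open>0 < C\<close> s by simp
    fix a :: "int \<Rightarrow> complex"
    assume w: "weighted_power p a summable_on UNIV"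
    note sum = weighted_inner_sup_sum_le[OF assms s t_def w sum_dyadic_cutoff_le[OF assms t], folded C_def]
    show "bdd_above (range (\<lambda>r. min 1 (2 powr (real r - real k)) * ahat a r))" for k
      by (rule inner_sup_powr_le(1)[OF assms s t_def w])
    show "summable (\<lambda>k. 2 powr (real k * (p - 1)) * inner_sup a k powr p)"
      by (rule sum(1))
    show "(\<Sum>k. 2 powr (real k * (p - 1)) * inner_sup a k powr p) \<le> s powr (1 - p) * C * (\<Sum>\<^sub>\<infinity>j. weighted_power p a j)"
      by (rule sum(2))
  qed
qed

theorem mainTheorem11:
  fixes p :: real
  assumes "1 < p"
  shows "\<exists>C>0. \<forall>a :: int \<Rightarrow> complex.
    (\<lambda>k. (real_of_int \<bar>k\<bar> + 1) powr (p - 2) * cmod (a k) powr p) summable_on UNIV \<longrightarrow>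
      (\<forall>k::nat. bdd_above (range (\<lambda>r::nat. min 1 (2 powr (real r - real k)) * ahat a r))) \<and>
      summable (\<lambda>k::nat. (2 powr (real k / (p / (p - 1))) * inner_sup a k) powr p) \<and>
      (\<Sum>k::nat. (2 powr (real k / (p / (p - 1))) * inner_sup a k) powr p) powr (1 / p)
        \<le> C * (\<Sum>\<^sub>\<infinity>k\<in>(UNIV::int set). (real_of_int \<bar>k\<bar> + 1) powr (p - 2) * cmod (a k) powr p) powr (1 / p)"
proof -
  obtain C where "0 < C" and bound: "\<forall>a. weighted_power p a summable_on UNIV \<longrightarrow>
      (\<forall>k. bdd_above (range (\<lambda>r. min 1 (2 powr (real r - real k)) * ahat a r))) \<and>
      summable (\<lambda>k. 2 powr (real k * (p - 1)) * inner_sup a k powr p) \<and>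
      (\<Sum>k. 2 powr (real k * (p - 1)) * inner_sup a k powr p) \<le> C * (\<Sum>\<^sub>\<infinity>j. weighted_power p a j)"
    using weighted_inner_sup_sum_bounded[OF assms] by blast
  show ?thesis
  proof (intro exI[of _ "C powr (1 / p)"] conjI allI impI)
    show "0 < C powr (1 / p)"
      using \<open>0 < C\<close> by simp
    fix a :: "int \<Rightarrow> complex"
    assume "(\<lambda>k. (real_of_int \<bar>k\<bar> + 1) powr (p - 2) * cmod (a k) powr p) summable_on UNIV"
    then have "weighted_power p a summable_on UNIV"
      by (simp add: weighted_power_def[abs_def])
    note bdd = bound[rule_format, OF this, THEN conjunct1, rule_format]
      and sum = bound[rule_format, OF this, THEN conjunct2]
    show "bdd_above (range (\<lambda>r. min 1 (2 powr (real r - real k)) * ahat a r))" for k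
      by (rule bdd)
    have terms: "(2 powr (real k / (p / (p - 1))) * inner_sup a k) powr p
        = 2 powr (real k * (p - 1)) * inner_sup a k powr p" for k
      using assms inner_sup_nonneg[OF bdd] by (rule powr_conjugate_exponent_mult)
    show "summable (\<lambda>k. (2 powr (real k / (p / (p - 1))) * inner_sup a k) powr p)"
      unfolding terms by (rule sum[THEN conjunct1])
    have "(\<Sum>k. (2 powr (real k / (p / (p - 1))) * inner_sup a k) powr p) powr (1 / p)
        \<le> (C * (\<Sum>\<^sub>\<infinity>j. weighted_power p a j)) powr (1 / p)"
      unfolding terms using assms sum by (intro powr_mono2 suminf_nonneg) auto
    then show "(\<Sum>k. (2 powr (real k / (p / (p - 1))) * inner_sup a k) powr p) powr (1 / p)
        \<le> C powr (1 / p) * (\<Sum>\<^sub>\<infinity>k\<in>(UNIV::int set). (real_of_int \<bar>k\<bar> + 1) powr (p - 2) * cmod (a k) powr p) powr (1 / p)"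
      using \<open>0 < C\<close> by (simp add: powr_mult infsum_nonneg weighted_power_def)
  qed
qed

end
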